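(* For every positive integer $n$, $\mathcal M(n)\le\mathcal M(n+1)$.
   Context: An edge-magic labelling of a graph $G$ with $n$ vertices and $m$ edges is a bijection $l:V(G)\cup E(G)\to\{1,\dots,m+n\}$ such that $l(a)+l(b)+l(ab)$ is the same for all edges $ab$; $G$ is edge-magic if it admits one. $\mathcal M(n)$ denotes the maximum number of edges of an edge-magic graph with $n$ vertices. *)

theory Defs
  imports Main
begin

definition simple_graph :: "'a set \<Rightarrow> 'a set set \<Rightarrow> bool" where
  "simple_graph V E \<longleftrightarrow> finite V \<and> (\<forall>e\<in>E. e \<subseteq> V \<and> card e = 2)"

definition edge_magic_labelling :: "'a set \<Rightarrow> 'a set set \<Rightarrow> ('a + 'a set \<Rightarrow> nat) \<Rightarrow> bool" where
  "edge_magic_labelling V E l \<longleftrightarrow>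
     bij_betw l (Inl ` V \<union> Inr ` E) {1..card V + card E} \<and>
     (\<exists>k. \<forall>a\<in>V. \<forall>b\<in>V. {a, b} \<in> E \<longrightarrow> l (Inl a) + l (Inl b) + l (Inr {a, b}) = k)"

definition edge_magic :: "'a set \<Rightarrow> 'a set set \<Rightarrow> bool" where
  "edge_magic V E \<longleftrightarrow> simple_graph V E \<and> (\<exists>l. edge_magic_labelling V E l)"

text \<open>M(n): maximum number of edges of an edge-magic graph on n vertices
  (every n-vertex graph is isomorphic to one on the vertex set {0..<n}).\<close>
definition M :: "nat \<Rightarrow> nat" where
  "M n = Max {card E | E. edge_magic {..<n} E}"

end

theory Submission
  imports Defs
begin

text \<open>Adding an isolated vertex preserves edge-magicness: give the new vertex the label 1 and
  shift every other label up by one, which raises the magic constant by 3. Hence every edge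
  count realised on n vertices is also realised on n + 1 vertices.\<close>

lemma bij_betw_insert_label_one:
  assumes "bij_betw f A {1..N}" and "a \<notin> A"
  shows "bij_betw (\<lambda>x. if x = a then 1 else Suc (f x)) (insert a A) {1..Suc N}"
proof -
  let ?g = "\<lambda>x. if x = a then 1 else Suc (f x)"
  have "bij_betw Suc {1..N} {2..Suc N}"
    by (simp add: bij_betw_def image_Suc_atLeastAtMost)
  then have "bij_betw (Suc \<circ> f) A {2..Suc N}"
    using assms(1) bij_betw_trans by blast
  then have "bij_betw ?g A {2..Suc N}"
    by (rule bij_betw_cong[THEN iffD1, rotated]) (use assms(2) in auto)
  then have "bij_betw ?g (A \<union> {a}) ({2..Suc N} \<union> {1})"
    using notIn_Un_bij_betw3[of a A ?g] assms(2) by simp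
  moreover have "{2..Suc N} \<union> {1} = {1..Suc N}" by auto
  ultimately show ?thesis by simp
qed

lemma edge_magic_insert_vertex:
  assumes "edge_magic V E" and "v \<notin> V"
  shows "edge_magic (insert v V) E"
proof -
  have "finite V" and edges: "\<And>e. e \<in> E \<Longrightarrow> e \<subseteq> V \<and> card e = 2"
    using assms(1) by (auto simp: edge_magic_def simple_graph_def)
  obtain l k where
    bij: "bij_betw l (Inl ` V \<union> Inr ` E) {1..card V + card E}" and
    magic: "\<And>a b. a \<in> V \<Longrightarrow> b \<in> V \<Longrightarrow> {a, b} \<in> E \<Longrightarrow>
      l (Inl a) + l (Inl b) + l (Inr {a, b}) = k"
    using assms(1) by (auto simp: edge_magic_def edge_magic_labelling_def)
  define l' where "l' x = (if x = Inl v then 1 else Suc (l x))" for x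
  have "Inl ` insert v V \<union> Inr ` E = insert (Inl v) (Inl ` V \<union> Inr ` E)" by auto
  moreover have "card (insert v V) + card E = Suc (card V + card E)"
    using \<open>finite V\<close> assms(2) by simp
  moreover have "Inl v \<notin> Inl ` V \<union> Inr ` E" using assms(2) by auto
  ultimately have bij': "bij_betw l' (Inl ` insert v V \<union> Inr ` E) {1..card (insert v V) + card E}"
    using bij_betw_insert_label_one[OF bij] by (simp add: l'_def[abs_def])
  have "l' (Inl a) + l' (Inl b) + l' (Inr {a, b}) = k + 3" if "{a, b} \<in> E" for a b
  proof -
    have "a \<in> V" "b \<in> V" using edges[OF that] by auto
    then show ?thesis using magic[OF _ _ that] assms(2) by (auto simp: l'_def)
  qed
  with bij' have "edge_magic_labelling (insert v V) E l'"
    unfolding edge_magic_labelling_def by blast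
  moreover have "simple_graph (insert v V) E"
    using \<open>finite V\<close> edges by (auto simp: simple_graph_def)
  ultimately show ?thesis by (auto simp: edge_magic_def)
qed

lemma edge_magic_no_edges:
  assumes "finite V"
  shows "edge_magic V {}"
  using assms
proof (induction V rule: finite_induct)
  case empty
  then show ?case
    by (auto simp: edge_magic_def edge_magic_labelling_def simple_graph_def bij_betw_def)
next
  case (insert v V)
  then show ?case by (simp add: edge_magic_insert_vertex)
qed

lemma finite_edge_magic_edge_counts:
  assumes "finite V"
  shows "finite {card E | E. edge_magic V E}"
proof -
  have "{card E | E. edge_magic V E} \<subseteq> card ` Pow (Pow V)"
    by (auto simp: edge_magic_def simple_graph_def)
  then show ?thesis
    using assms finite_subset by blast
qed

theorem lemma2:
  fixes n :: nat
  assumes "n \<ge> 1"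
  shows "M n \<le> M (n + 1)"
proof -
  have "{card E | E. edge_magic {..<n} E} \<subseteq> {card E | E. edge_magic {..<n + 1} E}"
    using edge_magic_insert_vertex[of "{..<n}" _ n] by (auto simp: lessThan_Suc)
  moreover have "{card E | E. edge_magic {..<n} E} \<noteq> {}"
    using edge_magic_no_edges[of "{..<n}"] by auto
  ultimately show ?thesis
    unfolding M_def by (rule Max_mono) (rule finite_edge_magic_edge_counts, simp)
qed

end
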